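(* Let $l/\mathbb{Q}$ be a totally complex finite Galois extension with group $G$, let $\widehat w$ be an archimedean place of $l$ with $G_{\widehat w}=\{1,\rho\}$, $\rho^2=1$, and let $\beta\in F_l$ be a special Minkowski unit with respect to $\widehat w$. Then $\rho(\beta)$ and $\beta\rho(\beta)$ are special Minkowski units with respect to $\widehat w$. Moreover, if $T=\{\tau_1,\dots,\tau_N\}$ is a transversal for the left cosets of $G_{\widehat w}$ in $G$, then $$\sum_{n=1}^N\log\bigl|\tau_m^{-1}\tau_n(\beta\rho(\beta))\bigr|_{\widehat w}=0\quad\text{for each } m=1,\dots,N.$$
   Context: For a number field $l$, $F_l=O_l^\times/\mathrm{Tor}(O_l^\times)$, with $\mathrm{Aut}(l/\mathbb{Q})$ acting on it. For a place $w$ of $l$, $\|\cdot\|_w$ extends the usual absolute value of $\mathbb{Q}$ and $|\cdot|_w=\|\cdot\|_w^{d_w/d}$ with $d_w=[l_w:\mathbb{Q}_w]$, $d=[l:\mathbb{Q}]$. For $\sigma\in G$, $\sigma w$ is the place with $\|\sigma^{-1}(\gamma)\|_w=\|\gamma\|_{\sigma w}$ for all $\gamma\in l$. $N$ is the number of archimedean places of $l$ and $G_{\widehat w}=\{\sigma\in G:\sigma\widehat w=\widehat w\}$ (of order 2 when $l$ is totally complex). An element $\beta\in F_l$ is a special Minkowski unit with respect to $\widehat w$ if $\log|\beta|_w<0$ for every archimedean place $w\ne\widehat w$. *)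

theory Defs
  imports "HOL-Analysis.Analysis" "HOL-Computational_Algebra.Polynomial"
begin

text \<open>A number field is modelled as a subfield l of the complex numbers that is
finite-dimensional as a vector space over the rationals.\<close>

definition rat_scale :: "rat \<Rightarrow> complex \<Rightarrow> complex" where
  "rat_scale q z = of_rat q * z"

definition subfield_C :: "complex set \<Rightarrow> bool" where
  "subfield_C l \<longleftrightarrow> 0 \<in> l \<and> 1 \<in> l \<and>
     (\<forall>x\<in>l. \<forall>y\<in>l. x + y \<in> l \<and> x * y \<in> l) \<and>
     (\<forall>x\<in>l. - x \<in> l \<and> inverse x \<in> l)"

definition number_field :: "complex set \<Rightarrow> bool" where
  "number_field l \<longleftrightarrow> subfield_C l \<and>
     (\<exists>B. finite B \<and> B \<subseteq> l \<and> l = module.span rat_scale B)"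

definition field_degree :: "complex set \<Rightarrow> nat" where
  "field_degree l = vector_space.dim rat_scale l"

definition embedding :: "complex set \<Rightarrow> (complex \<Rightarrow> complex) \<Rightarrow> bool" where
  "embedding l \<sigma> \<longleftrightarrow> \<sigma> 1 = 1 \<and>
     (\<forall>x\<in>l. \<forall>y\<in>l. \<sigma> (x + y) = \<sigma> x + \<sigma> y \<and> \<sigma> (x * y) = \<sigma> x * \<sigma> y)"

text \<open>l/Q Galois (normal; separability is automatic in characteristic 0).\<close>
definition galois_over_Q :: "complex set \<Rightarrow> bool" where
  "galois_over_Q l \<longleftrightarrow> number_field l \<and> (\<forall>\<sigma>. embedding l \<sigma> \<longrightarrow> \<sigma> ` l \<subseteq> l)"

definition totally_complex :: "complex set \<Rightarrow> bool" where
  "totally_complex l \<longleftrightarrow> (\<forall>\<sigma>. embedding l \<sigma> \<longrightarrow> (\<exists>x\<in>l. \<sigma> x \<notin> \<real>))"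

text \<open>Automorphism group Aut(l/Q); automorphisms are normalised to be the identity
outside l, so that the identity of the group is id and composition is (o).\<close>
definition Gal :: "complex set \<Rightarrow> (complex \<Rightarrow> complex) set" where
  "Gal l = {\<sigma>. embedding l \<sigma> \<and> bij_betw \<sigma> l l \<and> (\<forall>x. x \<notin> l \<longrightarrow> \<sigma> x = x)}"

text \<open>Archimedean places, represented by their normalised absolute value
  \<parallel>.\<parallel>_w = |sigma(.)| (restricted to l) for an embedding sigma.\<close>
definition arch_places :: "complex set \<Rightarrow> (complex \<Rightarrow> real) set" where
  "arch_places l = {(\<lambda>x. if x \<in> l then cmod (\<sigma> x) else 0) | \<sigma>. embedding l \<sigma>}"

definition local_degree :: "complex set \<Rightarrow> (complex \<Rightarrow> real) \<Rightarrow> nat" where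
  "local_degree l w = (if \<exists>\<sigma>. embedding l \<sigma> \<and> \<sigma> ` l \<subseteq> \<real> \<and>
        w = (\<lambda>x. if x \<in> l then cmod (\<sigma> x) else 0) then 1 else 2)"

definition abs_place :: "complex set \<Rightarrow> (complex \<Rightarrow> real) \<Rightarrow> complex \<Rightarrow> real" where
  "abs_place l w x = w x powr (real (local_degree l w) / real (field_degree l))"

text \<open>Action of G on places: \<parallel>sigma^-1 gamma\<parallel>_w = \<parallel>gamma\<parallel>_{sigma w}.\<close>
definition place_act :: "(complex \<Rightarrow> complex) \<Rightarrow> (complex \<Rightarrow> real) \<Rightarrow> (complex \<Rightarrow> real)" where
  "place_act \<sigma> w = w \<circ> inv \<sigma>"

definition stabilizer :: "complex set \<Rightarrow> (complex \<Rightarrow> real) \<Rightarrow> (complex \<Rightarrow> complex) set" where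
  "stabilizer l w = {\<sigma> \<in> Gal l. place_act \<sigma> w = w}"

definition unit_Ol :: "complex set \<Rightarrow> complex \<Rightarrow> bool" where
  "unit_Ol l x \<longleftrightarrow> x \<in> l \<and> x \<noteq> 0 \<and> algebraic_int x \<and> algebraic_int (inverse x)"

text \<open>Special Minkowski unit w.r.t. wh (on representatives of F_l = O_l^x / torsion;
  log|.|_w is well defined on F_l).\<close>
definition special_minkowski :: "complex set \<Rightarrow> (complex \<Rightarrow> real) \<Rightarrow> complex \<Rightarrow> bool" where
  "special_minkowski l wh \<beta> \<longleftrightarrow> unit_Ol l \<beta> \<and>
     (\<forall>w \<in> arch_places l. w \<noteq> wh \<longrightarrow> ln (abs_place l w \<beta>) < 0)"

end

theory Submission
  imports Defs "Jordan_Normal_Form.Char_Poly" "HOL-Computational_Algebra.Fundamental_Theorem_Algebra"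
begin

text \<open>Since \<open>\<rho>\<close> fixes \<open>wh\<close> and is an involution, \<open>w \<mapsto> w \<circ> \<rho>\<close> permutes the archimedean
places other than \<open>wh\<close>; as \<open>|\<rho> \<beta>|\<^sub>w = |\<beta>|\<^sub>w\<^sub>\<circ>\<^sub>\<rho>\<close>, \<open>\<rho> \<beta>\<close> is special, and products of special
units are special. For the sum put \<open>w = wh \<circ> \<tau>\<^sub>m\<^sup>-\<^sup>1\<close>: the \<open>n\<close>-th term is
\<open>log|\<tau>\<^sub>n \<beta>|\<^sub>w + log|\<tau>\<^sub>n \<rho> \<beta>|\<^sub>w\<close>, a sum over the coset \<open>\<tau>\<^sub>n {1, \<rho>}\<close>, so the whole sum is
\<open>log|N \<beta>|\<^sub>w\<close> with \<open>N \<beta> = \<Prod>\<^sub>g\<^sub>\<in>\<^sub>G g \<beta>\<close>. The norm is fixed by \<open>G\<close>, hence rational, and it is a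
unit of the algebraic integers, hence \<open>\<plusminus>1\<close>.

That the fixed field of \<open>G\<close> is \<open>\<rat>\<close> is the Galois-theoretic input: an irrational \<open>y\<close> has a
second root of its minimal polynomial (characteristic 0), and the embedding of \<open>\<rat>(y)\<close> sending
\<open>y\<close> there extends, one simple extension at a time, to all of \<open>l\<close>. Products of algebraic
integers are algebraic integers because \<open>x y\<close> is an eigenvalue of the Kronecker product of
integer companion matrices of \<open>x\<close> and \<open>y\<close>.\<close>

unbundle no m_inv_syntax

definition poly_over :: "complex set \<Rightarrow> complex poly \<Rightarrow> bool" where
  "poly_over K p \<longleftrightarrow> (\<forall>i. coeff p i \<in> K)"

context
  fixes K :: "complex set"
  assumes sf: "subfield_C K"
begin

lemma subfield_C_0 [simp]: "0 \<in> K" and subfield_C_1 [simp]: "1 \<in> K"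
  using sf unfolding subfield_C_def by auto

lemma subfield_C_add [intro]: "x \<in> K \<Longrightarrow> y \<in> K \<Longrightarrow> x + y \<in> K"
  and subfield_C_mult [intro]: "x \<in> K \<Longrightarrow> y \<in> K \<Longrightarrow> x * y \<in> K"
  and subfield_C_uminus [intro]: "x \<in> K \<Longrightarrow> - x \<in> K"
  and subfield_C_inverse [intro]: "x \<in> K \<Longrightarrow> inverse x \<in> K"
  using sf unfolding subfield_C_def by auto

lemma subfield_C_diff [intro]: "x \<in> K \<Longrightarrow> y \<in> K \<Longrightarrow> x - y \<in> K"
  using subfield_C_add[of x "-y"] by auto

lemma subfield_C_divide [intro]: "x \<in> K \<Longrightarrow> y \<in> K \<Longrightarrow> x / y \<in> K"
  by (simp add: divide_inverse subfield_C_inverse subfield_C_mult)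

lemma subfield_C_power [intro]: "x \<in> K \<Longrightarrow> x ^ n \<in> K"
  by (induction n) auto

lemma subfield_C_sum [intro]: "(\<And>i. i \<in> A \<Longrightarrow> f i \<in> K) \<Longrightarrow> sum f A \<in> K"
  by (induction A rule: infinite_finite_induct) auto

lemma subfield_C_prod [intro]: "(\<And>i. i \<in> A \<Longrightarrow> f i \<in> K) \<Longrightarrow> prod f A \<in> K"
  by (induction A rule: infinite_finite_induct) auto

lemma subfield_C_of_nat [intro]: "of_nat n \<in> K"
  by (induction n) auto

lemma subfield_C_of_int [intro]: "of_int k \<in> K"
proof (cases "k \<ge> 0")
  case True
  thus ?thesis
    using subfield_C_of_nat[of "nat k"] by simp
next
  case False
  thus ?thesis
    using subfield_C_uminus[OF subfield_C_of_nat[of "nat (-k)"]] by simp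
qed

lemma Rats_subset_subfield_C: "\<rat> \<subseteq> K"
proof
  fix x :: complex
  assume "x \<in> \<rat>"
  then obtain a b where "x = of_int a / of_int b"
    by (auto elim: Rats_cases')
  thus "x \<in> K"
    by auto
qed

lemma subfield_C_poly [intro]: "poly_over K p \<Longrightarrow> x \<in> K \<Longrightarrow> poly p x \<in> K"
  unfolding poly_over_def by (auto simp: poly_altdef)

lemma poly_over_add [intro]: "poly_over K p \<Longrightarrow> poly_over K q \<Longrightarrow> poly_over K (p + q)"
  and poly_over_diff [intro]: "poly_over K p \<Longrightarrow> poly_over K q \<Longrightarrow> poly_over K (p - q)"
  and poly_over_mult [intro]: "poly_over K p \<Longrightarrow> poly_over K q \<Longrightarrow> poly_over K (p * q)"
  and poly_over_smult [intro]: "a \<in> K \<Longrightarrow> poly_over K p \<Longrightarrow> poly_over K (Polynomial.smult a p)"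
  and poly_over_monom [intro]: "a \<in> K \<Longrightarrow> poly_over K (monom a n)"
  by (auto simp: poly_over_def coeff_mult coeff_monom)

lemma poly_over_pderiv [intro]: "poly_over K p \<Longrightarrow> poly_over K (pderiv p)"
  by (auto simp: poly_over_def coeff_pderiv intro!: subfield_C_mult subfield_C_add subfield_C_of_nat)

lemma poly_over_pCons [simp]: "poly_over K (pCons a p) \<longleftrightarrow> a \<in> K \<and> poly_over K p"
  by (auto simp: poly_over_def coeff_pCons split: nat.splits)

lemma poly_over_0 [intro]: "poly_over K 0"
  and poly_over_1 [intro]: "poly_over K 1"
  by (auto simp: poly_over_def coeff_1)

end

lemma subfield_C_Rats: "subfield_C \<rat>"
  by (auto simp: subfield_C_def)

lemma poly_over_mono: "poly_over K p \<Longrightarrow> K \<subseteq> L \<Longrightarrow> poly_over L p"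
  by (auto simp: poly_over_def)

lemma poly_over_Rats_imp: "subfield_C K \<Longrightarrow> poly_over \<rat> p \<Longrightarrow> poly_over K p"
  using Rats_subset_subfield_C poly_over_mono by blast

context
  fixes K :: "complex set" and \<phi> :: "complex \<Rightarrow> complex"
  assumes sf: "subfield_C K" and emb: "embedding K \<phi>"
begin

lemmas subfield_C_K [simp] = subfield_C_add[OF sf] subfield_C_mult[OF sf] subfield_C_uminus[OF sf]
  subfield_C_inverse[OF sf] subfield_C_of_nat[OF sf] subfield_C_of_int[OF sf] subfield_C_poly[OF sf]

lemma embedding_1 [simp]: "\<phi> 1 = 1"
  using emb by (simp add: embedding_def)

lemma embedding_add: "x \<in> K \<Longrightarrow> y \<in> K \<Longrightarrow> \<phi> (x + y) = \<phi> x + \<phi> y"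
  and embedding_mult: "x \<in> K \<Longrightarrow> y \<in> K \<Longrightarrow> \<phi> (x * y) = \<phi> x * \<phi> y"
  using emb by (auto simp: embedding_def)

lemma embedding_0 [simp]: "\<phi> 0 = 0"
  using embedding_add[of 0 0] sf by simp

lemma embedding_uminus: "x \<in> K \<Longrightarrow> \<phi> (- x) = - \<phi> x"
  using embedding_add[of x "-x"] sf by (simp add: eq_neg_iff_add_eq_0 add.commute)

lemma embedding_diff: "x \<in> K \<Longrightarrow> y \<in> K \<Longrightarrow> \<phi> (x - y) = \<phi> x - \<phi> y"
  using embedding_add[of x "-y"] embedding_uminus[of y] sf by auto

lemma embedding_inverse: "x \<in> K \<Longrightarrow> \<phi> (inverse x) = inverse (\<phi> x)"
proof (cases "x = 0")
  case False
  assume x: "x \<in> K"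
  have "\<phi> x * \<phi> (inverse x) = 1"
    using embedding_mult[of x "inverse x"] x sf False by auto
  thus ?thesis
    by (metis inverse_unique)
qed simp

lemma embedding_nonzero: "x \<in> K \<Longrightarrow> x \<noteq> 0 \<Longrightarrow> \<phi> x \<noteq> 0"
  using embedding_mult[of x "inverse x"] sf by force

lemma inj_on_embedding: "inj_on \<phi> K"
proof (rule inj_onI)
  fix x y
  assume "x \<in> K" "y \<in> K" "\<phi> x = \<phi> y"
  thus "x = y"
    using embedding_diff[of x y] embedding_nonzero[of "x - y"] sf by auto
qed

lemma embedding_prod: "(\<And>i. i \<in> A \<Longrightarrow> f i \<in> K) \<Longrightarrow> \<phi> (prod f A) = (\<Prod>i\<in>A. \<phi> (f i))"
proof (induction A rule: infinite_finite_induct)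
  case (insert x F)
  have "prod f F \<in> K"
    by (rule subfield_C_prod[OF sf]) (use insert in auto)
  thus ?case
    using insert by (auto simp: embedding_mult)
qed auto

lemma embedding_sum: "(\<And>i. i \<in> A \<Longrightarrow> f i \<in> K) \<Longrightarrow> \<phi> (sum f A) = (\<Sum>i\<in>A. \<phi> (f i))"
proof (induction A rule: infinite_finite_induct)
  case (insert x F)
  have "sum f F \<in> K"
    by (rule subfield_C_sum[OF sf]) (use insert in auto)
  thus ?case
    using insert by (auto simp: embedding_add)
qed auto

lemma embedding_of_nat [simp]: "\<phi> (of_nat n) = of_nat n"
  by (induction n) (auto simp: embedding_add sf)

lemma embedding_of_int [simp]: "\<phi> (of_int k) = of_int k"
proof (cases "k \<ge> 0")
  case False
  hence "of_int k = - (of_nat (nat (-k)) :: complex)"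
    by simp
  thus ?thesis
    using embedding_uminus[of "of_nat (nat (-k))"] sf by simp
qed (use embedding_of_nat[of "nat k"] in simp)

lemma embedding_Rats: "x \<in> \<rat> \<Longrightarrow> \<phi> x = x"
proof -
  assume "x \<in> \<rat>"
  then obtain a b where x: "x = of_int a / of_int b"
    by (auto elim: Rats_cases')
  show ?thesis
    unfolding x divide_inverse using sf by (subst embedding_mult) (auto simp: embedding_inverse)
qed

lemma embedding_poly: "poly_over K p \<Longrightarrow> x \<in> K \<Longrightarrow> \<phi> (poly p x) = poly (map_poly \<phi> p) (\<phi> x)"
proof (induction p rule: pCons_induct)
  case (pCons a p)
  thus ?case
    using sf by (auto simp: map_poly_pCons embedding_add embedding_mult)
qed simp

lemma embedding_poly_Rats: "poly_over \<rat> p \<Longrightarrow> x \<in> K \<Longrightarrow> \<phi> (poly p x) = poly p (\<phi> x)"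
proof -
  assume p: "poly_over \<rat> p" and x: "x \<in> K"
  have "map_poly \<phi> p = p"
    using p by (intro poly_eqI) (auto simp: coeff_map_poly poly_over_def embedding_Rats)
  thus ?thesis
    using embedding_poly[OF poly_over_Rats_imp[OF sf p] x] by simp
qed

lemma map_poly_embedding_add:
  "poly_over K p \<Longrightarrow> poly_over K q \<Longrightarrow> map_poly \<phi> (p + q) = map_poly \<phi> p + map_poly \<phi> q"
  by (intro poly_eqI) (auto simp: coeff_map_poly poly_over_def embedding_add)

lemma map_poly_embedding_diff:
  "poly_over K p \<Longrightarrow> poly_over K q \<Longrightarrow> map_poly \<phi> (p - q) = map_poly \<phi> p - map_poly \<phi> q"
  by (intro poly_eqI) (auto simp: coeff_map_poly poly_over_def embedding_diff)

lemma map_poly_embedding_mult: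
  assumes p: "poly_over K p" and q: "poly_over K q"
  shows "map_poly \<phi> (p * q) = map_poly \<phi> p * map_poly \<phi> q"
proof (intro poly_eqI)
  fix n
  have "coeff (map_poly \<phi> (p * q)) n = \<phi> (\<Sum>i\<le>n. coeff p i * coeff q (n - i))"
    by (simp add: coeff_map_poly coeff_mult)
  also have "\<dots> = (\<Sum>i\<le>n. \<phi> (coeff p i) * \<phi> (coeff q (n - i)))"
    using p q sf by (subst embedding_sum) (auto simp: poly_over_def embedding_mult)
  also have "\<dots> = coeff (map_poly \<phi> p * map_poly \<phi> q) n"
    by (simp add: coeff_map_poly coeff_mult)
  finally show "coeff (map_poly \<phi> (p * q)) n = coeff (map_poly \<phi> p * map_poly \<phi> q) n" .
qed

end

interpretation rs: vector_space rat_scale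
  by unfold_locales (auto simp: rat_scale_def algebra_simps of_rat_add of_rat_mult)

lemma number_field_subfield_C: "number_field l \<Longrightarrow> subfield_C l"
  by (simp add: number_field_def)

lemma rat_root_of_dependent_powers:
  fixes x :: complex
  assumes inj: "inj_on (\<lambda>i. x ^ i) {..n}" and dep: "rs.dependent ((\<lambda>i. x ^ i) ` {..n})"
  shows "\<exists>p. p \<noteq> 0 \<and> poly_over \<rat> p \<and> poly p x = 0"
proof -
  define S where "S = (\<lambda>i. x ^ i) ` {..n}"
  obtain t u where tu: "finite t" "t \<subseteq> S" "(\<Sum>v\<in>t. rat_scale (u v) v) = 0" "\<exists>v\<in>t. u v \<noteq> 0"
    using dep unfolding rs.dependent_explicit S_def by blast
  define c where "c = (\<lambda>i. if x ^ i \<in> t then of_rat (u (x ^ i)) else (0::complex))"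
  define p where "p = (\<Sum>i\<le>n. monom (c i) i)"
  have coeff_p: "coeff p j = (if j \<le> n then c j else 0)" for j
    by (simp add: p_def coeff_sum coeff_monom)
  have "poly_over \<rat> p"
    by (auto simp: poly_over_def coeff_p c_def)
  moreover have "p \<noteq> 0"
  proof -
    obtain v where v: "v \<in> t" "u v \<noteq> 0"
      using tu by blast
    then obtain j where "j \<le> n" "v = x ^ j"
      using tu(2) by (auto simp: S_def)
    hence "coeff p j \<noteq> 0"
      using v by (simp add: coeff_p c_def)
    thus ?thesis
      by auto
  qed
  moreover have "poly p x = 0"
  proof -
    have "poly p x = (\<Sum>i\<le>n. c i * x ^ i)"
      by (simp add: p_def poly_sum poly_monom)
    also have "\<dots> = (\<Sum>v\<in>S. if v \<in> t then of_rat (u v) * v else 0)"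
      unfolding S_def by (subst sum.reindex[OF inj]) (auto simp: c_def intro!: sum.cong)
    also have "\<dots> = (\<Sum>v\<in>t. of_rat (u v) * v)"
      using tu(1,2) by (simp add: sum.If_cases Int_absorb1 S_def)
    also have "\<dots> = 0"
      using tu(3) by (simp add: rat_scale_def)
    finally show ?thesis .
  qed
  ultimately show ?thesis
    by blast
qed

lemma number_field_algebraic:
  assumes nf: "number_field l" and x: "x \<in> l"
  shows "\<exists>p. p \<noteq> 0 \<and> poly_over \<rat> p \<and> poly p x = 0"
proof -
  obtain B where B: "finite B" "B \<subseteq> l" "l = rs.span B"
    using nf unfolding number_field_def by blast
  define n where "n = card B"
  show ?thesis
  proof (cases "inj_on (\<lambda>i. x ^ i) {..n}")
    case False
    then obtain i j where ij: "i \<le> n" "j \<le> n" "i \<noteq> j" "x ^ i = x ^ j"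
      unfolding inj_on_def by auto
    define p :: "complex poly" where "p = monom 1 i - monom 1 j"
    have "coeff p i = 1"
      using ij by (simp add: p_def coeff_monom)
    moreover have "poly_over \<rat> p"
      by (auto simp: poly_over_def p_def coeff_monom)
    moreover have "poly p x = 0"
      using ij by (simp add: p_def poly_monom)
    ultimately show ?thesis
      by (metis coeff_0 zero_neq_one)
  next
    case True
    have "(\<lambda>i. x ^ i) ` {..n} \<subseteq> rs.span B"
      using x number_field_subfield_C[OF nf] B(3) by auto
    moreover have "card ((\<lambda>i. x ^ i) ` {..n}) = n + 1"
      using True by (simp add: card_image)
    ultimately have "rs.dependent ((\<lambda>i. x ^ i) ` {..n})"
      using rs.independent_span_bound[OF B(1)] n_def by fastforce
    thus ?thesis
      by (rule rat_root_of_dependent_powers[OF True])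
  qed
qed

subsection \<open>Algebraic integers\<close>

lemma algebraic_int_companion:
  fixes x :: complex
  assumes "algebraic_int x"
  obtains a and C :: "nat \<Rightarrow> nat \<Rightarrow> int"
  where "a > 0" and "\<And>i. i < a \<Longrightarrow> (\<Sum>k<a. of_int (C i k) * x ^ k) = x * x ^ i"
proof -
  obtain p where p: "poly (map_poly of_int p) x = 0" "lead_coeff p = 1"
    using assms unfolding algebraic_int_altdef_ipoly by blast
  define a where "a = degree p"
  have "a > 0"
  proof (rule ccontr)
    assume "\<not> a > 0"
    hence "p = [:1:]"
      using p(2) unfolding a_def by (metis degree_0_id gr0I)
    thus False
      using p(1) by simp
  qed
  have "0 = (\<Sum>k\<le>a. of_int (coeff p k) * x ^ k)"
    using p(1) unfolding a_def by (simp add: poly_altdef degree_map_poly coeff_map_poly)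
  also have "\<dots> = (\<Sum>k<a. of_int (coeff p k) * x ^ k) + x ^ a"
    using p(2) by (simp add: lessThan_Suc_atMost[symmetric] a_def)
  finally have x_a: "x ^ a = (\<Sum>k<a. of_int (- coeff p k) * x ^ k)"
    by (simp add: eq_neg_iff_add_eq_0 add.commute sum_negf)
  \<comment> \<open>the companion matrix of \<open>p\<close>, acting on the basis \<open>1, x, \<dots>, x\<^sup>a\<^sup>-\<^sup>1\<close>\<close>
  define C where "C = (\<lambda>i k. if Suc i < a then (if k = Suc i then 1 else 0) else - coeff p k)"
  have "(\<Sum>k<a. of_int (C i k) * x ^ k) = x * x ^ i" if "i < a" for i
  proof (cases "Suc i < a")
    case True
    have "(\<Sum>k<a. of_int (C i k) * x ^ k) = (\<Sum>k<a. if k = Suc i then x ^ k else 0)"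
      using True by (intro sum.cong) (auto simp: C_def)
    thus ?thesis
      using True by simp
  next
    case False
    hence "Suc i = a"
      using that by linarith
    thus ?thesis
      using x_a by (auto simp: C_def)
  qed
  with \<open>a > 0\<close> show ?thesis
    using that by blast
qed

lemma algebraic_int_eigenvalue:
  fixes A :: "int mat" and v :: "complex vec"
  assumes A: "A \<in> carrier_mat n n" and v: "v \<in> carrier_vec n" "v \<noteq> 0\<^sub>v n"
    and Av: "map_mat of_int A *\<^sub>v v = z \<cdot>\<^sub>v v"
  shows "algebraic_int z"
proof -
  let ?B = "map_mat (of_int :: int \<Rightarrow> complex) A"
  have B: "?B \<in> carrier_mat n n"
    using A by simp
  have "eigenvalue ?B z"
    using v Av B unfolding eigenvalue_def eigenvector_def by auto
  hence "poly (char_poly ?B) z = 0"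
    using eigenvalue_root_char_poly[OF B] by simp
  hence "poly (map_poly of_int (char_poly A)) z = 0"
    by (simp add: of_int_hom.char_poly_hom[OF A])
  moreover have "lead_coeff (char_poly A) = 1"
    using degree_monic_char_poly[OF A] by simp
  ultimately show ?thesis
    unfolding algebraic_int_altdef_ipoly by blast
qed

lemma sum_lessThan_mult_div_mod:
  fixes a b :: nat
  shows "(\<Sum>s<a * b. g (s div b) (s mod b)) = (\<Sum>k<a. \<Sum>l<b. g k l :: 'c :: comm_monoid_add)"
proof (induction a)
  case (Suc a)
  have "(\<Sum>s<Suc a * b. g (s div b) (s mod b)) =
        (\<Sum>s\<in>{0..<a*b}. g (s div b) (s mod b)) + (\<Sum>s\<in>{a*b..<a*b+b}. g (s div b) (s mod b))"
    by (simp add: lessThan_atLeast0 sum.atLeastLessThan_concat add.commute)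
  also have "(\<Sum>s\<in>{a*b..<a*b+b}. g (s div b) (s mod b)) = (\<Sum>l\<in>{0..<b}. g a l)"
    by (subst sum.atLeastLessThan_shift_0) (auto intro!: sum.cong)
  finally show ?case
    using Suc by (simp add: lessThan_atLeast0)
qed simp

lemma algebraic_int_mult:
  fixes x y :: complex
  assumes "algebraic_int x" and "algebraic_int y"
  shows "algebraic_int (x * y)"
proof -
  obtain a Cx where a: "a > 0" and Cx: "\<And>i. i < a \<Longrightarrow> (\<Sum>k<a. of_int (Cx i k) * x ^ k) = x * x ^ i"
    using algebraic_int_companion[OF assms(1)] by blast
  obtain b Cy where b: "b > 0" and Cy: "\<And>j. j < b \<Longrightarrow> (\<Sum>l<b. of_int (Cy j l) * y ^ l) = y * y ^ j"
    using algebraic_int_companion[OF assms(2)] by blast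
  define n where "n = a * b"
  \<comment> \<open>the Kronecker product of the companion matrices, with eigenvector \<open>(x\<^sup>k y\<^sup>l)\<^sub>k\<^sub>,\<^sub>l\<close>\<close>
  define A :: "int mat"
    where "A = Matrix.mat n n (\<lambda>(r,s). Cx (r div b) (s div b) * Cy (r mod b) (s mod b))"
  define v :: "complex vec" where "v = Matrix.vec n (\<lambda>s. x ^ (s div b) * y ^ (s mod b))"
  have n0: "n > 0"
    using a b by (simp add: n_def)
  have A: "A \<in> carrier_mat n n" and v: "v \<in> carrier_vec n"
    by (simp_all add: A_def v_def)
  have v0: "v \<noteq> 0\<^sub>v n"
  proof
    assume "v = 0\<^sub>v n"
    hence "v $ 0 = 0"
      using n0 by simp
    thus False
      using n0 by (simp add: v_def)
  qed
  have "map_mat of_int A *\<^sub>v v = (x * y) \<cdot>\<^sub>v v"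
  proof (rule eq_vecI)
    fix r
    assume "r < dim_vec ((x * y) \<cdot>\<^sub>v v)"
    hence r: "r < n"
      by (simp add: v_def)
    have rb: "r div b < a" "r mod b < b"
      using r b by (auto simp: n_def less_mult_imp_div_less)
    have "(map_mat of_int A *\<^sub>v v) $ r = (\<Sum>s<n. of_int (Cx (r div b) (s div b) * Cy (r mod b) (s mod b)) *
             (x ^ (s div b) * y ^ (s mod b)))"
      using r by (simp add: A_def v_def scalar_prod_def lessThan_atLeast0)
    also have "\<dots> = (\<Sum>k<a. \<Sum>l<b. of_int (Cx (r div b) k * Cy (r mod b) l) * (x ^ k * y ^ l))"
      unfolding n_def by (rule sum_lessThan_mult_div_mod)
    also have "\<dots> = (\<Sum>k<a. of_int (Cx (r div b) k) * x ^ k) * (\<Sum>l<b. of_int (Cy (r mod b) l) * y ^ l)"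
      by (simp add: sum_product mult_ac)
    also have "\<dots> = (x * y) * v $ r"
      using Cx[OF rb(1)] Cy[OF rb(2)] r by (simp add: v_def mult_ac)
    finally show "(map_mat of_int A *\<^sub>v v) $ r = ((x * y) \<cdot>\<^sub>v v) $ r"
      using r by (simp add: v_def)
  qed (simp add: A_def v_def)
  from algebraic_int_eigenvalue[OF A v v0 this] show ?thesis .
qed

lemma algebraic_int_prod:
  "(\<And>i. i \<in> A \<Longrightarrow> algebraic_int (f i :: complex)) \<Longrightarrow> algebraic_int (prod f A)"
  by (induction A rule: infinite_finite_induct) (auto intro: algebraic_int_mult)

lemma algebraic_int_embedding:
  assumes sf: "subfield_C l" and emb: "embedding l \<sigma>" and x: "x \<in> l" and "algebraic_int x"
  shows "algebraic_int (\<sigma> x)"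
proof -
  obtain p where p: "lead_coeff p = 1" "\<forall>i. coeff p i \<in> \<int>" "poly p x = 0"
    using assms(4) by (auto elim: algebraic_int.cases)
  have "poly_over \<rat> p"
    using p(2) Ints_subset_Rats by (auto simp: poly_over_def)
  hence "poly p (\<sigma> x) = \<sigma> (poly p x)"
    by (simp add: embedding_poly_Rats[OF sf emb _ x])
  hence "poly p (\<sigma> x) = 0"
    using p(3) embedding_0[OF sf emb] by simp
  thus ?thesis
    using p by (intro algebraic_int.intros) auto
qed

subsection \<open>Minimal polynomials\<close>

definition is_minpoly :: "complex set \<Rightarrow> complex \<Rightarrow> complex poly \<Rightarrow> bool" where
  "is_minpoly K z m \<longleftrightarrow> poly_over K m \<and> lead_coeff m = 1 \<and> poly m z = 0 \<and>
     (\<forall>p. poly_over K p \<and> p \<noteq> 0 \<and> poly p z = 0 \<longrightarrow> degree m \<le> degree p)"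

lemma is_minpoly_exists:
  assumes nf: "number_field l" and sf: "subfield_C K" and "K \<subseteq> l" and "z \<in> l"
  shows "\<exists>m. is_minpoly K z m"
proof -
  obtain p0 where p0: "p0 \<noteq> 0" "poly_over \<rat> p0" "poly p0 z = 0"
    using number_field_algebraic[OF nf \<open>z \<in> l\<close>] by blast
  define P where "P = (\<lambda>n. \<exists>p. poly_over K p \<and> p \<noteq> 0 \<and> poly p z = 0 \<and> degree p = n)"
  have "P (degree p0)"
    unfolding P_def using p0 poly_over_Rats_imp[OF sf] by blast
  hence "P (LEAST n. P n)"
    by (rule LeastI)
  then obtain p where p: "poly_over K p" "p \<noteq> 0" "poly p z = 0" "degree p = (LEAST n. P n)"
    unfolding P_def by blast
  have lc: "lead_coeff p \<noteq> 0" "lead_coeff p \<in> K"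
    using p(1,2) by (auto simp: poly_over_def)
  define m where "m = Polynomial.smult (inverse (lead_coeff p)) p"
  have "degree m \<le> degree q" if "poly_over K q" "q \<noteq> 0" "poly q z = 0" for q
  proof -
    have "(LEAST n. P n) \<le> degree q"
      by (rule Least_le) (use that in \<open>auto simp: P_def\<close>)
    thus ?thesis
      unfolding m_def using lc p by simp
  qed
  moreover have "poly_over K m"
    unfolding m_def using lc p(1) sf by (intro poly_over_smult subfield_C_inverse) auto
  ultimately have "is_minpoly K z m"
    unfolding is_minpoly_def m_def using lc p(3) by simp
  thus ?thesis ..
qed

lemma poly_over_division:
  assumes sf: "subfield_C K" and m: "poly_over K m" "lead_coeff m = 1" and "poly_over K p"
  shows "\<exists>s r. poly_over K s \<and> poly_over K r \<and> p = s * m + r \<and> (r = 0 \<or> degree r < degree m)"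
  using \<open>poly_over K p\<close>
proof (induction "degree p" arbitrary: p rule: less_induct)
  case less
  show ?case
  proof (cases "p = 0 \<or> degree p < degree m")
    case True
    thus ?thesis
      using less.prems sf by (intro exI[of _ 0] exI[of _ p]) auto
  next
    case False
    hence dm: "degree m \<le> degree p"
      by auto
    define c where "c = lead_coeff p"
    define d where "d = degree p - degree m"
    define p' where "p' = p - monom c d * m"
    have cK: "c \<in> K"
      using less.prems by (auto simp: poly_over_def c_def)
    have p': "poly_over K p'"
      unfolding p'_def using less.prems cK m sf by blast
    have "degree (monom c d * m) \<le> degree p"
      using degree_mult_le[of "monom c d" m] degree_monom_le[of c d] dm unfolding d_def by linarith
    hence "degree p' \<le> degree p"
      unfolding p'_def by (meson degree_diff_le le_refl)
    moreover have "coeff p' (degree p) = 0"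
      using dm m(2) by (simp add: p'_def c_def coeff_monom_mult d_def)
    ultimately consider "p' = 0" | "degree p' < degree p"
      by (metis leading_coeff_0_iff order_le_less)
    thus ?thesis
    proof cases
      case 1
      hence "p = monom c d * m + 0"
        unfolding p'_def by simp
      thus ?thesis
        using cK sf by (intro exI[of _ "monom c d"] exI[of _ 0]) auto
    next
      case 2
      from less.hyps[OF this p'] obtain s r where sr: "poly_over K s" "poly_over K r"
        "p' = s * m + r" "r = 0 \<or> degree r < degree m"
        by blast
      have "p = (s + monom c d) * m + r"
        using sr(3) unfolding p'_def by (simp add: algebra_simps)
      thus ?thesis
        using sr cK sf by (intro exI[of _ "s + monom c d"] exI[of _ r]) auto
    qed
  qed
qed

lemma is_minpoly_dvd:
  assumes sf: "subfield_C K" and m: "is_minpoly K z m" and p: "poly_over K p" "poly p z = 0"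
  shows "\<exists>s. poly_over K s \<and> p = s * m"
proof -
  have mK: "poly_over K m" "lead_coeff m = 1" "poly m z = 0"
    using m by (auto simp: is_minpoly_def)
  obtain s r where sr: "poly_over K s" "poly_over K r" "p = s * m + r" "r = 0 \<or> degree r < degree m"
    using poly_over_division[OF sf mK(1,2) p(1)] by blast
  have "poly r z = 0"
    using sr(3) p(2) mK(3) by simp
  hence "r = 0"
    using m sr(2,4) by (auto simp: is_minpoly_def)
  thus ?thesis
    using sr by auto
qed

lemma is_minpoly_degree_ge_1:
  assumes "is_minpoly K z m"
  shows "degree m \<noteq> 0"
proof
  assume "degree m = 0"
  hence "m = 1"
    using assms by (metis degree_0_id is_minpoly_def one_pCons)
  thus False
    using assms by (simp add: is_minpoly_def)
qed

text \<open>The minimal polynomial over \<open>\<rat>\<close> is separable: a double root would be a root of its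
  nonzero derivative, whose degree is smaller.\<close>

lemma is_minpoly_other_root:
  assumes m: "is_minpoly \<rat> y m" and y: "y \<notin> \<rat>"
  shows "\<exists>y'. poly m y' = 0 \<and> y' \<noteq> y"
proof -
  have mQ: "poly_over \<rat> m" "lead_coeff m = 1" "poly m y = 0"
    using m by (auto simp: is_minpoly_def)
  have d0: "degree m \<noteq> 0"
    using is_minpoly_degree_ge_1[OF m] .
  have d1: "degree m \<noteq> 1"
  proof
    assume d: "degree m = 1"
    hence "coeff m 0 + y = 0"
      using mQ(2,3) by (simp add: poly_altdef)
    hence "y = - coeff m 0"
      by (simp add: eq_neg_iff_add_eq_0 add.commute)
    thus False
      using mQ(1) y by (simp add: poly_over_def)
  qed
  obtain r where r: "m = [:-y, 1:] * r"
    using mQ(3) poly_eq_0_iff_dvd by (metis dvdE)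
  have "r \<noteq> 0"
    using r mQ(2) by auto
  hence "degree m = degree [:-y, 1:] + degree r"
    unfolding r by (intro degree_mult_eq) auto
  hence "degree m = 1 + degree r"
    by simp
  hence "degree r > 0"
    using d0 d1 by linarith
  then obtain w where w: "poly r w = 0"
    using fundamental_theorem_of_algebra constant_degree by (metis neq0_conv)
  show ?thesis
  proof (cases "w = y")
    case False
    thus ?thesis
      using w r by (intro exI[of _ w]) simp
  next
    case True
    have "pderiv [:-y, 1:] = 1"
      by (simp add: pderiv_pCons)
    hence "pderiv m = [:-y, 1:] * pderiv r + r"
      unfolding r pderiv_mult by simp
    hence "poly (pderiv m) y = 0"
      using w True by simp
    moreover have "pderiv m \<noteq> 0"
      using degree_pderiv[of m] d0 d1 by (metis degree_0 diff_is_0_eq le_antisym less_one not_less)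
    moreover have "poly_over \<rat> (pderiv m)"
      using mQ(1) subfield_C_Rats by blast
    ultimately have "degree m \<le> degree (pderiv m)"
      using m by (auto simp: is_minpoly_def)
    thus ?thesis
      using degree_pderiv[of m] d0 by simp
  qed
qed

subsection \<open>Simple extensions and extension of embeddings\<close>

definition Q_subalgebra :: "complex set \<Rightarrow> bool" where
  "Q_subalgebra R \<longleftrightarrow> \<rat> \<subseteq> R \<and> (\<forall>x\<in>R. \<forall>y\<in>R. x + y \<in> R \<and> x * y \<in> R)"

lemma Q_subalgebra_poly: "Q_subalgebra R \<Longrightarrow> poly_over \<rat> p \<Longrightarrow> x \<in> R \<Longrightarrow> poly p x \<in> R"
proof (induction p rule: pCons_induct)
  case (pCons a p)
  have "a \<in> R" "poly_over \<rat> p"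
    using pCons.prems subfield_C_Rats by (auto simp: Q_subalgebra_def)
  thus ?case
    using pCons by (auto simp: Q_subalgebra_def)
qed (auto simp: Q_subalgebra_def)

lemma rat_root_nonzero_constant_coeff:
  assumes "x \<noteq> 0"
  shows "p \<noteq> 0 \<Longrightarrow> poly_over \<rat> p \<Longrightarrow> poly p x = 0 \<Longrightarrow>
    \<exists>q. poly_over \<rat> q \<and> poly q x = 0 \<and> coeff q 0 \<noteq> 0"
proof (induction p rule: pCons_induct)
  case (pCons a p)
  show ?case
  proof (cases "a = 0")
    case False
    thus ?thesis
      using pCons.prems by (intro exI[of _ "pCons a p"]) auto
  next
    case True
    thus ?thesis
      using pCons assms subfield_C_Rats by auto
  qed
qed simp

text \<open>A \<open>\<rat>\<close>-subalgebra of a number field is a field: if \<open>c + x q(x) = 0\<close> with \<open>c \<noteq> 0\<close>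
  then \<open>x\<^sup>-\<^sup>1 = - q(x) / c\<close>.\<close>

lemma Q_subalgebra_inverse:
  assumes nf: "number_field l" and R: "Q_subalgebra R" "R \<subseteq> l" and x: "x \<in> R"
  shows "inverse x \<in> R"
proof (cases "x = 0")
  case True
  thus ?thesis
    using R by (auto simp: Q_subalgebra_def)
next
  case False
  obtain p where p: "p \<noteq> 0" "poly_over \<rat> p" "poly p x = 0"
    using number_field_algebraic[OF nf] x R by blast
  obtain q where q: "poly_over \<rat> q" "poly q x = 0" "coeff q 0 \<noteq> 0"
    using rat_root_nonzero_constant_coeff[OF False p] by blast
  obtain c q1 where qc: "q = pCons c q1"
    by (cases q) auto
  have c: "c \<noteq> 0" "c \<in> \<rat>"
    using q qc by (auto simp: poly_over_def dest: spec[of _ 0])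
  have q1: "poly_over \<rat> q1"
    using q(1) qc subfield_C_Rats by simp
  have "c + x * poly q1 x = 0"
    using q(2) qc by simp
  hence "inverse x = poly q1 x * (- inverse c)"
    using c False by (simp add: field_simps add_eq_0_iff2)
  moreover have "poly q1 x \<in> R"
    using Q_subalgebra_poly[OF R(1) q1 x] .
  moreover have "- inverse c \<in> R"
    using c R(1) by (auto simp: Q_subalgebra_def)
  ultimately show ?thesis
    using R(1) unfolding Q_subalgebra_def by (metis (no_types))
qed

definition adjoin :: "complex set \<Rightarrow> complex \<Rightarrow> complex set" where
  "adjoin K z = {poly p z | p. poly_over K p}"

lemma subset_adjoin: "subfield_C K \<Longrightarrow> K \<subseteq> adjoin K z"
  unfolding adjoin_def by (auto intro!: exI[of _ "[:_:]"])

lemma mem_adjoin: "subfield_C K \<Longrightarrow> z \<in> adjoin K z"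
  unfolding adjoin_def by (auto intro!: exI[of _ "[:0,1:]"])

lemma Q_subalgebra_adjoin:
  assumes sf: "subfield_C K"
  shows "Q_subalgebra (adjoin K z)"
  unfolding Q_subalgebra_def
proof (intro conjI ballI)
  show "\<rat> \<subseteq> adjoin K z"
    using Rats_subset_subfield_C[OF sf] subset_adjoin[OF sf] by blast
next
  fix x y
  assume "x \<in> adjoin K z" "y \<in> adjoin K z"
  then obtain p q where pq: "x = poly p z" "y = poly q z" "poly_over K p" "poly_over K q"
    unfolding adjoin_def by blast
  hence "x + y = poly (p + q) z" "x * y = poly (p * q) z"
    by simp_all
  moreover have "poly_over K (p + q)" "poly_over K (p * q)"
    using pq sf by auto
  ultimately show "x + y \<in> adjoin K z" "x * y \<in> adjoin K z"
    unfolding adjoin_def by blast+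
qed

text \<open>An embedding \<open>\<phi>\<close> of \<open>K\<close> extends to \<open>K(z)\<close> by \<open>p(z) \<mapsto> p\<^sup>\<phi>(z')\<close> for any root \<open>z'\<close> of \<open>m\<^sup>\<phi>\<close>;
  this is well defined because \<open>m\<close> divides every polynomial vanishing at \<open>z\<close>.\<close>

lemma embedding_extend_adjoin:
  assumes sf: "subfield_C K" and emb: "embedding K \<phi>"
    and m: "is_minpoly K z m" and z': "poly (map_poly \<phi> m) z' = 0"
  shows "\<exists>\<phi>'. embedding (adjoin K z) \<phi>' \<and> (\<forall>x\<in>K. \<phi>' x = \<phi> x) \<and> \<phi>' z = z'"
proof -
  have mK: "poly_over K m"
    using m by (simp add: is_minpoly_def)
  have well_defined: "poly (map_poly \<phi> p) z' = poly (map_poly \<phi> q) z'"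
    if "poly_over K p" "poly_over K q" "poly p z = poly q z" for p q
  proof -
    have "poly_over K (p - q)" "poly (p - q) z = 0"
      using that sf by auto
    then obtain s where s: "poly_over K s" "p - q = s * m"
      using is_minpoly_dvd[OF sf m] by blast
    have "map_poly \<phi> p - map_poly \<phi> q = map_poly \<phi> s * map_poly \<phi> m"
      using s that mK
      by (simp add: map_poly_embedding_diff[OF sf emb, symmetric] map_poly_embedding_mult[OF sf emb])
    hence "poly (map_poly \<phi> p) z' - poly (map_poly \<phi> q) z' = 0"
      using z' by (metis mult_zero_right poly_diff poly_mult)
    thus ?thesis
      by simp
  qed
  define \<phi>' where "\<phi>' = (\<lambda>x. poly (map_poly \<phi> (SOME p. poly_over K p \<and> poly p z = x)) z')"
  have \<phi>'_poly: "\<phi>' (poly p z) = poly (map_poly \<phi> p) z'" if "poly_over K p" for p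
  proof -
    have "\<exists>q. poly_over K q \<and> poly q z = poly p z"
      using that by blast
    from someI_ex[OF this] show ?thesis
      unfolding \<phi>'_def using well_defined that by blast
  qed
  have "embedding (adjoin K z) \<phi>'"
    unfolding embedding_def
  proof (intro conjI ballI)
    show "\<phi>' 1 = 1"
      using \<phi>'_poly[of 1] sf embedding_1[OF sf emb] by auto
  next
    fix x y
    assume "x \<in> adjoin K z" "y \<in> adjoin K z"
    then obtain p q where pq: "x = poly p z" "y = poly q z" "poly_over K p" "poly_over K q"
      unfolding adjoin_def by blast
    have "poly_over K (p + q)" "poly_over K (p * q)"
      using pq sf by auto
    hence "\<phi>' (poly (p + q) z) = poly (map_poly \<phi> (p + q)) z'"
      "\<phi>' (poly (p * q) z) = poly (map_poly \<phi> (p * q)) z'"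
      using \<phi>'_poly by blast+
    thus "\<phi>' (x + y) = \<phi>' x + \<phi>' y" and "\<phi>' (x * y) = \<phi>' x * \<phi>' y"
      using pq \<phi>'_poly
      by (simp_all add: map_poly_embedding_add[OF sf emb] map_poly_embedding_mult[OF sf emb])
  qed
  moreover have "\<phi>' x = \<phi> x" if "x \<in> K" for x
  proof -
    have "map_poly \<phi> [:x:] = [:\<phi> x:]"
      by (intro poly_eqI) (simp add: coeff_map_poly coeff_pCons embedding_0[OF sf emb] split: nat.splits)
    thus ?thesis
      using \<phi>'_poly[of "[:x:]"] that sf poly_over_0[OF sf] by simp
  qed
  moreover have "\<phi>' z = z'"
    using \<phi>'_poly[of "[:0, 1:]"] sf poly_over_0[OF sf] embedding_0[OF sf emb] embedding_1[OF sf emb] by simp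
  ultimately show ?thesis
    by blast
qed

context
  fixes l :: "complex set"
  assumes nf: "number_field l"
begin

lemma adjoin_subset: "subfield_C K \<Longrightarrow> K \<subseteq> l \<Longrightarrow> z \<in> l \<Longrightarrow> adjoin K z \<subseteq> l"
  unfolding adjoin_def using subfield_C_poly[OF number_field_subfield_C[OF nf]] poly_over_mono
  by blast

lemma subfield_C_adjoin:
  assumes sf: "subfield_C K" and "K \<subseteq> l" and "z \<in> l"
  shows "subfield_C (adjoin K z)"
proof -
  have R: "Q_subalgebra (adjoin K z)"
    by (rule Q_subalgebra_adjoin[OF sf])
  have "- x \<in> adjoin K z" if "x \<in> adjoin K z" for x
  proof -
    have "-1 \<in> adjoin K z"
      using R by (auto simp: Q_subalgebra_def)
    hence "(-1) * x \<in> adjoin K z"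
      using R that by (auto simp: Q_subalgebra_def)
    thus ?thesis
      by simp
  qed
  thus ?thesis
    unfolding subfield_C_def
    using R Q_subalgebra_inverse[OF nf R adjoin_subset[OF assms]] by (auto simp: Q_subalgebra_def)
qed

lemma embedding_extend_simple:
  assumes sf: "subfield_C K" and Kl: "K \<subseteq> l" and emb: "embedding K \<phi>" and z: "z \<in> l"
  shows "\<exists>K' \<phi>'. subfield_C K' \<and> K \<subseteq> K' \<and> K' \<subseteq> l \<and> z \<in> K' \<and> embedding K' \<phi>' \<and>
            (\<forall>x\<in>K. \<phi>' x = \<phi> x)"
proof -
  obtain m where m: "is_minpoly K z m"
    using is_minpoly_exists[OF nf sf Kl z] by blast
  have "coeff (map_poly \<phi> m) (degree m) = 1"
    using m by (simp add: is_minpoly_def coeff_map_poly embedding_0[OF sf emb] embedding_1[OF sf emb])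
  hence "degree (map_poly \<phi> m) > 0"
    using is_minpoly_degree_ge_1[OF m] by (metis gr0I le_degree le_zero_eq one_neq_zero)
  then obtain z' where "poly (map_poly \<phi> m) z' = 0"
    using fundamental_theorem_of_algebra constant_degree by (metis neq0_conv)
  from embedding_extend_adjoin[OF sf emb m this] show ?thesis
    using subfield_C_adjoin[OF sf Kl z] subset_adjoin[OF sf] adjoin_subset[OF sf Kl z] mem_adjoin[OF sf]
    by blast
qed

lemma embedding_extend_list:
  "set zs \<subseteq> l \<Longrightarrow> subfield_C K \<Longrightarrow> K \<subseteq> l \<Longrightarrow> embedding K \<phi> \<Longrightarrow>
   \<exists>K' \<phi>'. subfield_C K' \<and> K \<subseteq> K' \<and> K' \<subseteq> l \<and> set zs \<subseteq> K' \<and> embedding K' \<phi>' \<and>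
            (\<forall>x\<in>K. \<phi>' x = \<phi> x)"
proof (induction zs arbitrary: K \<phi>)
  case Nil
  thus ?case
    by (intro exI[of _ K] exI[of _ \<phi>]) auto
next
  case (Cons z zs)
  have "z \<in> l" "set zs \<subseteq> l"
    using Cons.prems(1) by auto
  obtain K1 \<phi>1 where 1: "subfield_C K1" "K \<subseteq> K1" "K1 \<subseteq> l" "z \<in> K1" "embedding K1 \<phi>1"
    "\<forall>x\<in>K. \<phi>1 x = \<phi> x"
    using embedding_extend_simple[OF Cons.prems(2,3,4) \<open>z \<in> l\<close>] by blast
  obtain K2 \<phi>2 where 2: "subfield_C K2" "K1 \<subseteq> K2" "K2 \<subseteq> l" "set zs \<subseteq> K2" "embedding K2 \<phi>2"
    "\<forall>x\<in>K1. \<phi>2 x = \<phi>1 x"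
    using Cons.IH[OF \<open>set zs \<subseteq> l\<close> 1(1,3,5)] by blast
  show ?case
    using 1 2 by (intro exI[of _ K2] exI[of _ \<phi>2]) auto
qed

lemma embedding_extend:
  assumes sf: "subfield_C K" and Kl: "K \<subseteq> l" and emb: "embedding K \<phi>"
  shows "\<exists>\<sigma>. embedding l \<sigma> \<and> (\<forall>x\<in>K. \<sigma> x = \<phi> x)"
proof -
  obtain B where B: "finite B" "B \<subseteq> l" "l = rs.span B"
    using nf unfolding number_field_def by blast
  obtain zs where zs: "set zs = B"
    using finite_list[OF B(1)] by blast
  obtain K' \<phi>' where K': "subfield_C K'" "K' \<subseteq> l" "B \<subseteq> K'" "embedding K' \<phi>'"
    "\<forall>x\<in>K. \<phi>' x = \<phi> x"
    using embedding_extend_list[OF _ sf Kl emb, of zs] zs B(2) by auto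
  have "rs.subspace K'"
    unfolding rs.subspace_def rat_scale_def using K'(1) Rats_subset_subfield_C[OF K'(1)]
    by (auto intro!: subfield_C_add subfield_C_mult)
  hence "l \<subseteq> K'"
    using K'(3) B(3) rs.span_minimal by blast
  hence "K' = l"
    using K'(2) by auto
  thus ?thesis
    using K' by blast
qed

lemma embedding_moves_irrational:
  assumes "y \<in> l" "y \<notin> \<rat>"
  shows "\<exists>\<sigma>. embedding l \<sigma> \<and> \<sigma> y \<noteq> y"
proof -
  have Ql: "\<rat> \<subseteq> l"
    using Rats_subset_subfield_C[OF number_field_subfield_C[OF nf]] .
  have id: "embedding \<rat> id"
    by (simp add: embedding_def)
  obtain m where m: "is_minpoly \<rat> y m"
    using is_minpoly_exists[OF nf subfield_C_Rats Ql assms(1)] by blast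
  obtain y' where y': "poly m y' = 0" "y' \<noteq> y"
    using is_minpoly_other_root[OF m assms(2)] by blast
  obtain \<phi> where \<phi>: "embedding (adjoin \<rat> y) \<phi>" "\<phi> y = y'"
    using embedding_extend_adjoin[OF subfield_C_Rats id m] y' by auto
  obtain \<sigma> where "embedding l \<sigma>" "\<forall>x\<in>adjoin \<rat> y. \<sigma> x = \<phi> x"
    using embedding_extend[OF subfield_C_adjoin[OF subfield_C_Rats Ql assms(1)]
        adjoin_subset[OF subfield_C_Rats Ql assms(1)] \<phi>(1)] by blast
  thus ?thesis
    using \<phi>(2) y'(2) mem_adjoin[OF subfield_C_Rats] by metis
qed

lemma embedding_image_eq:
  assumes emb: "embedding l \<sigma>" and into: "\<sigma> ` l \<subseteq> l"
  shows "\<sigma> ` l = l"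
proof
  have sfl: "subfield_C l"
    using number_field_subfield_C[OF nf] .
  show "l \<subseteq> \<sigma> ` l"
  proof
    fix x
    assume x: "x \<in> l"
    obtain p where p: "p \<noteq> 0" "poly_over \<rat> p" "poly p x = 0"
      using number_field_algebraic[OF nf x] by blast
    \<comment> \<open>\<open>\<sigma>\<close> permutes the finitely many roots of \<open>p\<close> in \<open>l\<close>\<close>
    define R where "R = {r \<in> l. poly p r = 0}"
    have "finite R"
      unfolding R_def using poly_roots_finite[OF p(1)] by (rule rev_finite_subset) auto
    moreover have "\<sigma> ` R \<subseteq> R"
      using into p(2) embedding_poly_Rats[OF sfl emb] embedding_0[OF sfl emb]
      by (auto simp: R_def) (metis)
    moreover have "inj_on \<sigma> R"
      using inj_on_embedding[OF sfl emb] unfolding R_def by (rule inj_on_subset) auto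
    ultimately have "\<sigma> ` R = R"
      by (metis card_image card_subset_eq)
    moreover have "x \<in> R"
      using x p unfolding R_def by simp
    ultimately show "x \<in> \<sigma> ` l"
      unfolding R_def by blast
  qed
qed (rule into)

end

subsection \<open>The Galois group and its fixed field\<close>

lemma embedding_comp:
  assumes "embedding l \<sigma>" and "embedding l g" and "\<And>x. x \<in> l \<Longrightarrow> g x \<in> l"
  shows "embedding l (\<sigma> \<circ> g)"
  using assms unfolding embedding_def by auto

lemma Gal_embedding: "g \<in> Gal l \<Longrightarrow> embedding l g"
  and Gal_closed: "g \<in> Gal l \<Longrightarrow> x \<in> l \<Longrightarrow> g x \<in> l"
  and Gal_fixes_outside: "g \<in> Gal l \<Longrightarrow> x \<notin> l \<Longrightarrow> g x = x"
  and Gal_image: "g \<in> Gal l \<Longrightarrow> g ` l = l"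
  by (auto simp: Gal_def bij_betw_def)

lemma bij_Gal:
  assumes g: "g \<in> Gal l"
  shows "bij g"
proof -
  have "bij_betw g (- l) (- l)"
    using bij_betw_cong[of "- l" g id] Gal_fixes_outside[OF g] by simp
  moreover have "bij_betw g l l"
    using g by (simp add: Gal_def)
  ultimately have "bij_betw g (l \<union> - l) (l \<union> - l)"
    by (intro bij_betw_combine) auto
  thus ?thesis
    by simp
qed

lemma Gal_comp_closed:
  assumes g: "g \<in> Gal l" and h: "h \<in> Gal l"
  shows "g \<circ> h \<in> Gal l"
  using embedding_comp[OF Gal_embedding[OF g] Gal_embedding[OF h] Gal_closed[OF h]]
    bij_betw_trans[of h l l g] g h Gal_fixes_outside[OF g] Gal_fixes_outside[OF h]
  by (simp add: Gal_def)

lemma Gal_inv_closed: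
  assumes g: "g \<in> Gal l"
  shows "inv g \<in> Gal l"
proof -
  have inv_g: "inv g (g x) = x" "g (inv g x) = x" for x
    using bij_Gal[OF g] by (simp_all add: bij_is_inj bij_is_surj surj_f_inv_f)
  have bij_inv: "bij_betw (inv g) l l"
    using bij_betw_inv_into_subset[OF bij_Gal[OF g] subset_UNIV Gal_image[OF g]] .
  hence in_l: "inv g x \<in> l" if "x \<in> l" for x
    using that by (auto simp: bij_betw_def)
  have "embedding l (inv g)"
    unfolding embedding_def
  proof (intro conjI ballI)
    show "inv g 1 = 1"
      using inv_g(1)[of 1] Gal_embedding[OF g] by (simp add: embedding_def)
  next
    fix x y
    assume "x \<in> l" "y \<in> l"
    hence "g (inv g x + inv g y) = x + y" "g (inv g x * inv g y) = x * y"
      using Gal_embedding[OF g] in_l inv_g(2) by (auto simp: embedding_def)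
    thus "inv g (x + y) = inv g x + inv g y" "inv g (x * y) = inv g x * inv g y"
      by (metis inv_g(1))+
  qed
  moreover have "inv g x = x" if "x \<notin> l" for x
    using inv_g(1)[of x] Gal_fixes_outside[OF g that] by simp
  ultimately show ?thesis
    using bij_inv by (simp add: Gal_def)
qed

lemma bij_betw_Gal_comp_left:
  assumes h: "h \<in> Gal l"
  shows "bij_betw (\<lambda>g. h \<circ> g) (Gal l) (Gal l)"
proof (rule bij_betwI[where g = "\<lambda>g. inv h \<circ> g"])
  have "inv h \<circ> h = id" "h \<circ> inv h = id"
    using bij_Gal[OF h] by (simp_all add: bij_def surj_iff[symmetric])
  thus "inv h \<circ> (h \<circ> g) = g" "h \<circ> (inv h \<circ> g) = g" for g
    by (simp_all add: comp_assoc[symmetric])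
qed (use Gal_comp_closed[OF h] Gal_comp_closed[OF Gal_inv_closed[OF h]] in auto)

lemma Gal_normalize:
  assumes nf: "number_field l" and emb: "embedding l \<sigma>" and into: "\<sigma> ` l \<subseteq> l"
  shows "(\<lambda>x. if x \<in> l then \<sigma> x else x) \<in> Gal l"
proof -
  have sfl: "subfield_C l"
    using number_field_subfield_C[OF nf] .
  let ?s = "\<lambda>x. if x \<in> l then \<sigma> x else x"
  have "embedding l ?s"
    using emb sfl unfolding embedding_def by (auto simp: subfield_C_add subfield_C_mult)
  moreover have "bij_betw ?s l l"
  proof (rule bij_betw_imageI)
    show "inj_on ?s l"
      using inj_on_embedding[OF sfl emb] by (auto simp: inj_on_def)
    show "?s ` l = l"
      using embedding_image_eq[OF nf emb into] by (auto intro: image_cong)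
  qed
  ultimately show ?thesis
    unfolding Gal_def by auto
qed

lemma Gal_fixed_imp_Rats:
  assumes gal: "galois_over_Q l" and y: "y \<in> l" and fixed: "\<forall>g\<in>Gal l. g y = y"
  shows "y \<in> \<rat>"
proof (rule ccontr)
  assume "y \<notin> \<rat>"
  have nf: "number_field l"
    using gal by (simp add: galois_over_Q_def)
  obtain \<sigma> where \<sigma>: "embedding l \<sigma>" "\<sigma> y \<noteq> y"
    using embedding_moves_irrational[OF nf y \<open>y \<notin> \<rat>\<close>] by blast
  have "\<sigma> ` l \<subseteq> l"
    using gal \<sigma>(1) by (simp add: galois_over_Q_def)
  from Gal_normalize[OF nf \<sigma>(1) this] fixed y \<sigma>(2) show False
    by auto
qed

lemma unit_Ol_mult:
  "subfield_C l \<Longrightarrow> unit_Ol l x \<Longrightarrow> unit_Ol l y \<Longrightarrow> unit_Ol l (x * y)"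
  by (auto simp: unit_Ol_def inverse_mult_distrib intro: algebraic_int_mult)

lemma unit_Ol_Gal:
  assumes sfl: "subfield_C l" and g: "g \<in> Gal l" and x: "unit_Ol l x"
  shows "unit_Ol l (g x)"
proof -
  have "x \<in> l" "x \<noteq> 0" "algebraic_int x" "algebraic_int (inverse x)"
    using x by (simp_all add: unit_Ol_def)
  moreover have "g (inverse x) = inverse (g x)"
    using embedding_inverse[OF sfl Gal_embedding[OF g] \<open>x \<in> l\<close>] .
  ultimately show ?thesis
    using algebraic_int_embedding[OF sfl Gal_embedding[OF g]] subfield_C_inverse[OF sfl]
      embedding_nonzero[OF sfl Gal_embedding[OF g]] Gal_closed[OF g]
    unfolding unit_Ol_def by metis
qed

definition Gal_norm :: "complex set \<Rightarrow> complex \<Rightarrow> complex" where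
  "Gal_norm l x = (\<Prod>g\<in>Gal l. g x)"

lemma Gal_norm_in_Rats:
  assumes gal: "galois_over_Q l" and x: "x \<in> l"
  shows "Gal_norm l x \<in> \<rat>"
proof (rule Gal_fixed_imp_Rats[OF gal])
  have sfl: "subfield_C l"
    using gal by (simp add: galois_over_Q_def number_field_subfield_C)
  show "Gal_norm l x \<in> l"
    unfolding Gal_norm_def using x Gal_closed by (intro subfield_C_prod[OF sfl]) auto
  show "\<forall>h\<in>Gal l. h (Gal_norm l x) = Gal_norm l x"
  proof
    fix h
    assume h: "h \<in> Gal l"
    have "h (Gal_norm l x) = (\<Prod>g\<in>Gal l. (h \<circ> g) x)"
      unfolding Gal_norm_def using x Gal_closed by (subst embedding_prod[OF sfl Gal_embedding[OF h]]) auto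
    also have "\<dots> = Gal_norm l x"
      unfolding Gal_norm_def using prod.reindex_bij_betw[OF bij_betw_Gal_comp_left[OF h], of "\<lambda>g. g x"]
      by simp
    finally show "h (Gal_norm l x) = Gal_norm l x" .
  qed
qed

lemma Gal_norm_unit:
  assumes gal: "galois_over_Q l" and fin: "finite (Gal l)" and x: "unit_Ol l x"
  shows "Gal_norm l x = 1 \<or> Gal_norm l x = -1"
proof -
  have sfl: "subfield_C l"
    using gal by (simp add: galois_over_Q_def number_field_subfield_C)
  have units: "unit_Ol l (g x)" if "g \<in> Gal l" for g
    using unit_Ol_Gal[OF sfl that x] .
  have N: "Gal_norm l x \<in> \<rat>"
    using Gal_norm_in_Rats[OF gal] x by (simp add: unit_Ol_def)
  have "algebraic_int (Gal_norm l x)"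
    unfolding Gal_norm_def using units by (intro algebraic_int_prod) (simp add: unit_Ol_def)
  then obtain a where a: "Gal_norm l x = of_int a"
    using rational_algebraic_int_is_int[OF _ N] by (auto elim: Ints_cases)
  have "inverse (Gal_norm l x) = (\<Prod>g\<in>Gal l. inverse (g x))"
    unfolding Gal_norm_def by (simp add: prod_inversef[symmetric])
  hence "algebraic_int (inverse (Gal_norm l x))"
    using units by (auto simp: unit_Ol_def intro!: algebraic_int_prod)
  then obtain b where b: "inverse (Gal_norm l x) = of_int b"
    using rational_algebraic_int_is_int N by (metis Ints_cases Rats_inverse)
  have "Gal_norm l x \<noteq> 0"
    unfolding Gal_norm_def using fin units by (simp add: unit_Ol_def)
  hence "of_int (a * b) = (1 :: complex)"
    using a b by (metis of_int_mult right_inverse)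
  hence "a = 1 \<or> a = -1"
    by (metis of_int_eq_1_iff zmult_eq_1_iff)
  thus ?thesis
    using a by auto
qed

subsection \<open>Archimedean places\<close>

lemma arch_placesE:
  assumes "w \<in> arch_places l"
  obtains \<sigma> where "embedding l \<sigma>" and "w = (\<lambda>x. if x \<in> l then cmod (\<sigma> x) else 0)"
  using assms unfolding arch_places_def by blast

lemma arch_place_pos:
  assumes sfl: "subfield_C l" and "w \<in> arch_places l" and "x \<in> l" "x \<noteq> 0"
  shows "w x > 0"
proof -
  obtain \<sigma> where "embedding l \<sigma>" "w = (\<lambda>x. if x \<in> l then cmod (\<sigma> x) else 0)"
    using assms(2) by (rule arch_placesE)
  thus ?thesis
    using assms(3,4) embedding_nonzero[OF sfl] by auto
qed

lemma ln_arch_place_mult: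
  assumes sfl: "subfield_C l" and w: "w \<in> arch_places l"
    and x: "x \<in> l" "x \<noteq> 0" and y: "y \<in> l" "y \<noteq> 0"
  shows "ln (w (x * y)) = ln (w x) + ln (w y)"
proof -
  obtain \<sigma> where \<sigma>: "embedding l \<sigma>" "w = (\<lambda>x. if x \<in> l then cmod (\<sigma> x) else 0)"
    using w by (rule arch_placesE)
  have "w (x * y) = w x * w y"
    using \<sigma> x y embedding_mult[OF sfl \<sigma>(1) x(1) y(1)] subfield_C_mult[OF sfl x(1) y(1)]
    by (simp add: norm_mult)
  moreover have "w x > 0" "w y > 0"
    using arch_place_pos[OF sfl w] x y by auto
  ultimately show ?thesis
    by (simp add: ln_mult)
qed

lemma arch_places_comp_Gal:
  assumes "w \<in> arch_places l" and g: "g \<in> Gal l"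
  shows "w \<circ> g \<in> arch_places l"
proof -
  obtain \<sigma> where \<sigma>: "embedding l \<sigma>" "w = (\<lambda>x. if x \<in> l then cmod (\<sigma> x) else 0)"
    using assms(1) by (rule arch_placesE)
  have "w \<circ> g = (\<lambda>x. if x \<in> l then cmod ((\<sigma> \<circ> g) x) else 0)"
    using \<sigma>(2) Gal_closed[OF g] Gal_fixes_outside[OF g] by (auto simp: fun_eq_iff)
  thus ?thesis
    using embedding_comp[OF \<sigma>(1) Gal_embedding[OF g] Gal_closed[OF g]]
    unfolding arch_places_def by blast
qed

lemma sum_ln_arch_place_Gal_conj:
  assumes gal: "galois_over_Q l" and fin: "finite (Gal l)"
    and w: "w \<in> arch_places l" and x: "unit_Ol l x"
  shows "(\<Sum>g\<in>Gal l. ln (w (g x))) = 0"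
proof -
  have sfl: "subfield_C l"
    using gal by (simp add: galois_over_Q_def number_field_subfield_C)
  obtain \<sigma> where \<sigma>: "embedding l \<sigma>" "w = (\<lambda>x. if x \<in> l then cmod (\<sigma> x) else 0)"
    using w by (rule arch_placesE)
  have conj: "g x \<in> l" "g x \<noteq> 0" if "g \<in> Gal l" for g
    using unit_Ol_Gal[OF sfl that x] by (simp_all add: unit_Ol_def)
  have "(\<Sum>g\<in>Gal l. ln (w (g x))) = ln (\<Prod>g\<in>Gal l. w (g x))"
    using conj arch_place_pos[OF sfl w] by (intro ln_prod[OF fin, symmetric]) force
  also have "(\<Prod>g\<in>Gal l. w (g x)) = cmod (\<sigma> (Gal_norm l x))"
    unfolding Gal_norm_def using conj \<sigma>(2)
    by (simp add: embedding_prod[OF sfl \<sigma>(1)] prod_norm)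
  also have "\<sigma> (Gal_norm l x) = Gal_norm l x"
    using embedding_Rats[OF sfl \<sigma>(1) Gal_norm_in_Rats[OF gal]] x by (simp add: unit_Ol_def)
  finally show ?thesis
    using Gal_norm_unit[OF gal fin x] by auto
qed

subsection \<open>Special Minkowski units\<close>

lemma abs_place_totally_complex:
  assumes "totally_complex l"
  shows "abs_place l w x = w x powr (2 / real (field_degree l))"
proof -
  have "\<not> (\<exists>\<sigma>. embedding l \<sigma> \<and> \<sigma> ` l \<subseteq> \<real>)"
    using assms unfolding totally_complex_def by blast
  thus ?thesis
    unfolding abs_place_def local_degree_def by auto
qed

lemma ln_abs_place_mult:
  assumes sfl: "subfield_C l" and w: "w \<in> arch_places l"
    and "x \<in> l" "x \<noteq> 0" "y \<in> l" "y \<noteq> 0"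
  shows "ln (abs_place l w (x * y)) = ln (abs_place l w x) + ln (abs_place l w y)"
  unfolding abs_place_def ln_powr ln_arch_place_mult[OF assms] by (simp add: distrib_left)

lemma special_minkowski_mult:
  assumes sfl: "subfield_C l"
    and \<beta>: "special_minkowski l wh \<beta>" and \<gamma>: "special_minkowski l wh \<gamma>"
  shows "special_minkowski l wh (\<beta> * \<gamma>)"
  using assms unit_Ol_mult[OF sfl] ln_abs_place_mult[OF sfl]
  by (fastforce simp: special_minkowski_def unit_Ol_def)

lemma special_minkowski_involution:
  assumes sfl: "subfield_C l" and tc: "totally_complex l"
    and \<rho>: "\<rho> \<in> Gal l" "\<rho> \<circ> \<rho> = id" "place_act \<rho> wh = wh"
    and \<beta>: "special_minkowski l wh \<beta>"
  shows "special_minkowski l wh (\<rho> \<beta>)"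
  unfolding special_minkowski_def
proof (intro conjI ballI impI)
  show "unit_Ol l (\<rho> \<beta>)"
    using \<beta> unit_Ol_Gal[OF sfl \<rho>(1)] by (simp add: special_minkowski_def)
next
  fix w
  assume w: "w \<in> arch_places l" "w \<noteq> wh"
  have inv_\<rho>: "inv \<rho> = \<rho>"
    using inv_unique_comp[OF \<rho>(2) \<rho>(2)] .
  hence "wh \<circ> \<rho> = wh"
    using \<rho>(3) by (simp add: place_act_def)
  hence "w \<circ> \<rho> \<noteq> wh"
    using w(2) \<rho>(2) by (metis comp_assoc comp_id)
  moreover have "w \<circ> \<rho> \<in> arch_places l"
    using arch_places_comp_Gal[OF w(1) \<rho>(1)] .
  ultimately have "ln (abs_place l (w \<circ> \<rho>) \<beta>) < 0"
    using \<beta> by (simp add: special_minkowski_def)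
  thus "ln (abs_place l w (\<rho> \<beta>)) < 0"
    using abs_place_totally_complex[OF tc] by simp
qed

lemma bij_betw_transversal_Gal:
  assumes \<tau>: "\<forall>n\<in>I. \<tau> n \<in> Gal l" and S: "S \<subseteq> Gal l"
    and transversal: "\<forall>\<sigma>\<in>Gal l. \<exists>!n. n \<in> I \<and> (\<exists>h\<in>S. \<sigma> = \<tau> n \<circ> h)"
  shows "bij_betw (\<lambda>(n, h). \<tau> n \<circ> h) (I \<times> S) (Gal l)"
proof (rule bij_betw_imageI)
  show "inj_on (\<lambda>(n, h). \<tau> n \<circ> h) (I \<times> S)"
  proof (rule inj_onI, clarify)
    fix n h n' h'
    assume nh: "n \<in> I" "h \<in> S" "n' \<in> I" "h' \<in> S" and eq: "\<tau> n \<circ> h = \<tau> n' \<circ> h'"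
    have "\<tau> n \<circ> h \<in> Gal l"
      using Gal_comp_closed \<tau> S nh by blast
    hence "\<exists>!k. k \<in> I \<and> (\<exists>h''\<in>S. \<tau> n \<circ> h = \<tau> k \<circ> h'')"
      using transversal by blast
    hence "n = n'"
      using nh eq by blast
    moreover have "inj (\<tau> n)"
      using bij_Gal \<tau> nh(1) bij_is_inj by blast
    ultimately show "n = n' \<and> h = h'"
      using eq by (auto simp: fun_eq_iff inj_eq)
  qed
  show "(\<lambda>(n, h). \<tau> n \<circ> h) ` (I \<times> S) = Gal l"
  proof
    show "(\<lambda>(n, h). \<tau> n \<circ> h) ` (I \<times> S) \<subseteq> Gal l"
      using Gal_comp_closed \<tau> S by auto
    show "Gal l \<subseteq> (\<lambda>(n, h). \<tau> n \<circ> h) ` (I \<times> S)"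
      using transversal by (auto simp: image_iff)
  qed
qed

lemma sum_transversal_pair_eq_0:
  assumes bij: "bij_betw (\<lambda>(n, h). \<tau> n \<circ> h) (I \<times> {id, \<rho>}) G" and "finite I"
    and sum_G: "(\<Sum>g\<in>G. F g) = (0 :: real)"
  shows "(\<Sum>n\<in>I. F (\<tau> n) + F (\<tau> n \<circ> \<rho>)) = 0"
proof -
  have "(\<Sum>n\<in>I. \<Sum>h\<in>{id, \<rho>}. F (\<tau> n \<circ> h)) = (\<Sum>g\<in>G. F g)"
    using sum.reindex_bij_betw[OF bij, of F]
    by (simp add: sum.cartesian_product case_prod_unfold)
  hence sum_cosets: "(\<Sum>n\<in>I. \<Sum>h\<in>{id, \<rho>}. F (\<tau> n \<circ> h)) = 0"
    using sum_G by simp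
  show ?thesis
  proof (cases "\<rho> = id")
    case True
    thus ?thesis
      using sum_cosets by (simp add: sum_distrib_left[symmetric])
  next
    case False
    thus ?thesis
      using sum_cosets by simp
  qed
qed

lemma sum_ln_abs_place_transversal_eq_0:
  assumes gal: "galois_over_Q l" and tc: "totally_complex l"
    and bij: "bij_betw (\<lambda>(n, h). \<tau> n \<circ> h) (I \<times> {id, \<rho>}) (Gal l)" and I: "finite I"
    and w: "w \<in> arch_places l" and \<rho>: "\<rho> \<in> Gal l" and \<beta>: "unit_Ol l \<beta>"
  shows "(\<Sum>n\<in>I. ln (abs_place l w (\<tau> n (\<beta> * \<rho> \<beta>)))) = 0"
proof -
  have sfl: "subfield_C l"
    using gal by (simp add: galois_over_Q_def number_field_subfield_C)
  have "finite (Gal l)"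
    using bij_betw_finite[OF bij] I by simp
  hence "(\<Sum>g\<in>Gal l. ln (w (g \<beta>))) = 0"
    by (rule sum_ln_arch_place_Gal_conj[OF gal _ w \<beta>])
  hence sum_0: "(\<Sum>n\<in>I. ln (w (\<tau> n \<beta>)) + ln (w ((\<tau> n \<circ> \<rho>) \<beta>))) = 0"
    by (rule sum_transversal_pair_eq_0[OF bij I])
  have term_eq: "ln (abs_place l w (\<tau> n (\<beta> * \<rho> \<beta>))) =
      2 / real (field_degree l) * (ln (w (\<tau> n \<beta>)) + ln (w ((\<tau> n \<circ> \<rho>) \<beta>)))" if n: "n \<in> I" for n
  proof -
    have \<tau>: "\<tau> n \<in> Gal l"
      using bij_betw_apply[OF bij, of "(n, id)"] n by simp
    have "unit_Ol l (\<rho> \<beta>)" "unit_Ol l (\<tau> n \<beta>)" "unit_Ol l (\<tau> n (\<rho> \<beta>))"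
      using unit_Ol_Gal[OF sfl] \<tau> \<rho> \<beta> by blast+
    moreover have "\<tau> n (\<beta> * \<rho> \<beta>) = \<tau> n \<beta> * \<tau> n (\<rho> \<beta>)"
      using embedding_mult[OF sfl Gal_embedding[OF \<tau>]] \<beta> calculation(1) by (simp add: unit_Ol_def)
    ultimately show ?thesis
      using ln_arch_place_mult[OF sfl w]
      by (simp add: abs_place_totally_complex[OF tc] ln_powr unit_Ol_def)
  qed
  hence "(\<Sum>n\<in>I. ln (abs_place l w (\<tau> n (\<beta> * \<rho> \<beta>)))) =
      2 / real (field_degree l) * (\<Sum>n\<in>I. ln (w (\<tau> n \<beta>)) + ln (w ((\<tau> n \<circ> \<rho>) \<beta>)))"
    unfolding sum_distrib_left by (rule sum.cong[OF refl])
  thus ?thesis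
    using sum_0 by simp
qed

theorem lemma5p3:
  fixes l :: "complex set" and wh :: "complex \<Rightarrow> real"
    and \<rho> :: "complex \<Rightarrow> complex" and \<beta> :: complex and \<tau> :: "nat \<Rightarrow> complex \<Rightarrow> complex"
  assumes "galois_over_Q l" and "totally_complex l"
    and "wh \<in> arch_places l"
    and "\<rho> \<in> Gal l" and "stabilizer l wh = {id, \<rho>}" and "\<rho> \<circ> \<rho> = id"
    and "special_minkowski l wh \<beta>"
    and "\<forall>n \<in> {1..card (arch_places l)}. \<tau> n \<in> Gal l"
    and "\<forall>\<sigma> \<in> Gal l. \<exists>!n. n \<in> {1..card (arch_places l)} \<and>
            (\<exists>h \<in> stabilizer l wh. \<sigma> = \<tau> n \<circ> h)"
  shows "special_minkowski l wh (\<rho> \<beta>) \<and> special_minkowski l wh (\<beta> * \<rho> \<beta>) \<and>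
    (\<forall>m \<in> {1..card (arch_places l)}.
       (\<Sum>n = 1..card (arch_places l). ln (abs_place l wh (inv (\<tau> m) (\<tau> n (\<beta> * \<rho> \<beta>))))) = 0)"
proof -
  let ?I = "{1..card (arch_places l)}"
  have sfl: "subfield_C l"
    using assms(1) by (simp add: galois_over_Q_def number_field_subfield_C)
  have "\<rho> \<in> stabilizer l wh"
    using assms(5) by simp
  hence "place_act \<rho> wh = wh"
    by (simp add: stabilizer_def)
  hence conj: "special_minkowski l wh (\<rho> \<beta>)"
    using special_minkowski_involution[OF sfl assms(2,4,6)] assms(7) by blast
  have "bij_betw (\<lambda>(n, h). \<tau> n \<circ> h) (?I \<times> {id, \<rho>}) (Gal l)"
    using bij_betw_transversal_Gal[OF assms(8) _ assms(9)] assms(5) by (simp add: stabilizer_def)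
  moreover have "unit_Ol l \<beta>"
    using assms(7) by (simp add: special_minkowski_def)
  ultimately have "(\<Sum>n\<in>?I. ln (abs_place l (wh \<circ> inv (\<tau> m)) (\<tau> n (\<beta> * \<rho> \<beta>)))) = 0"
    if "m \<in> ?I" for m
    using sum_ln_abs_place_transversal_eq_0[OF assms(1,2)] assms(3,4,8) that
      arch_places_comp_Gal Gal_inv_closed by blast
  thus ?thesis
    using conj special_minkowski_mult[OF sfl assms(7) conj]
    by (simp add: abs_place_totally_complex[OF assms(2)])
qed

end
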